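(* Let $K\colon\mathbb{E}(D)\to\mathbb{E}(D)$ be an affine function and $u\colon D\to[0,\infty)$. If $\mathsf{D}K$ has a $u$-ranking supermartingale, then $\inf_n(\mathsf{D}K)^n(u)=\mathbb{O}$.
   Context: $\mathbb{E}(D)$ is the set of functions $D\to[0,\infty]$ with pointwise order and operations ($\infty+x=\infty$, $0\cdot\infty=0$, $r\cdot\infty=\infty$ for $r>0$); $\mathbb{O}$ is the constant zero function; for $x\ge y$ in $[0,\infty]$, $x-y$ is the least $z$ with $x=y+z$. $K$ is affine if $K(\alpha\eta_1+(1-\alpha)\eta_2)=\alpha K(\eta_1)+(1-\alpha)K(\eta_2)$ for all $\eta_1,\eta_2$ and $\alpha\in[0,1]$. $(\mathsf{D}K)(\eta)=K(\eta)-K(\mathbb{O})$. A $u$-ranking supermartingale with respect to $\mathsf{D}K$ is a function $r\colon D\to[0,\infty)$ with $(\mathsf{D}K)(r)+u\le r$. *)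

theory Defs
  imports "HOL-Library.Extended_Nonnegative_Real"
begin

text \<open>E(D) is rendered as the type 'd \<Rightarrow> ennreal with pointwise order/operations.
  The truncated difference on [0,\<infinity>]: for x \<ge> y, the least z with x = y + z.\<close>

definition tdiff :: "ennreal \<Rightarrow> ennreal \<Rightarrow> ennreal" where
  "tdiff x y = (LEAST z. x = y + z)"

definition zeroE :: "'d \<Rightarrow> ennreal" where
  "zeroE = (\<lambda>_. 0)"

definition affineE :: "(('d \<Rightarrow> ennreal) \<Rightarrow> ('d \<Rightarrow> ennreal)) \<Rightarrow> bool" where
  "affineE K \<longleftrightarrow> (\<forall>\<eta>1 \<eta>2 (\<alpha>::real). 0 \<le> \<alpha> \<and> \<alpha> \<le> 1 \<longrightarrow>
     K (\<lambda>d. ennreal \<alpha> * \<eta>1 d + ennreal (1 - \<alpha>) * \<eta>2 d) =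
     (\<lambda>d. ennreal \<alpha> * K \<eta>1 d + ennreal (1 - \<alpha>) * K \<eta>2 d))"

definition diffop :: "(('d \<Rightarrow> ennreal) \<Rightarrow> ('d \<Rightarrow> ennreal)) \<Rightarrow> ('d \<Rightarrow> ennreal) \<Rightarrow> ('d \<Rightarrow> ennreal)" where
  "diffop K \<eta> = (\<lambda>d. tdiff (K \<eta> d) (K zeroE d))"

definition ranking_supermartingale ::
  "(('d \<Rightarrow> ennreal) \<Rightarrow> ('d \<Rightarrow> ennreal)) \<Rightarrow> ('d \<Rightarrow> ennreal) \<Rightarrow> ('d \<Rightarrow> ennreal) \<Rightarrow> bool" where
  "ranking_supermartingale L u r \<longleftrightarrow> (\<forall>d. r d < \<infinity>) \<and> (\<forall>d. L r d + u d \<le> r d)"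

end

theory Submission
  imports Defs
begin

text \<open>Affinity of K yields K(a + b) + K(0) = K(a) + K(b) (compare the midpoints of a, b and
  of a + b, 0) and K(0) \<le> K(\<eta>), since K(\<eta>) = \<alpha> K(\<eta>/\<alpha>) + (1 - \<alpha>) K(0) \<ge> (1 - \<alpha>) K(0)
  for all 0 < \<alpha> \<le> 1. Hence DK is additive, and so monotone. Applying (DK)^k to DK(r) + u \<le> r
  and summing over k < n gives (DK)^0(u) + ... + (DK)^(n-1)(u) \<le> r; since r is finite, the bound
  n * inf_k (DK)^k(u) \<le> r for all n forces the infimum to vanish.\<close>

lemma tdiff_top_top: "tdiff top top = 0"
  unfolding tdiff_def by (intro Least_equality) auto

lemma tdiff_eq_minus:
  assumes "y \<le> x" "y \<noteq> top"
  shows "tdiff x y = x - y"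
  unfolding tdiff_def
proof (rule Least_equality)
  show "x = y + (x - y)"
    using assms(1) by (simp add: add_diff_inverse_ennreal)
  show "x - y \<le> z" if "x = y + z" for z
    using that assms(2) by simp
qed

lemma tdiff_add_split:
  fixes x y z c :: ennreal
  assumes "x + c = y + z" "c \<le> x" "c \<le> y" "c \<le> z"
  shows "tdiff x c = tdiff y c + tdiff z c"
proof (cases "c = top")
  case True
  then show ?thesis
    using assms(2-4) by (simp add: top_unique tdiff_top_top)
next
  case False
  obtain p q where "y = c + p" "z = c + q"
    using assms(3,4) by (metis add_diff_inverse_ennreal)
  with assms(1) have "c + x = c + (c + (p + q))"
    by (simp add: ac_simps)
  with False have "x = c + (p + q)"
    by (simp add: ennreal_add_left_cancel)
  with \<open>y = c + p\<close> \<open>z = c + q\<close> False show ?thesis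
    by (simp add: tdiff_eq_minus)
qed

lemma ennreal_le_if_scaled_le:
  fixes c x :: ennreal
  assumes "\<And>\<alpha>. 0 < \<alpha> \<Longrightarrow> \<alpha> \<le> 1 \<Longrightarrow> ennreal (1 - \<alpha>) * c \<le> x"
  shows "c \<le> x"
proof (cases "c = top")
  case True
  then show ?thesis
    using assms[of "1/2"] by (simp add: top_unique)
next
  case False
  have "(\<lambda>n. c * ennreal (1 - inverse (real (Suc n)))) \<longlonglongrightarrow> c * ennreal (1 - 0)"
    using False by (intro ennreal_tendsto_cmult tendsto_ennrealI tendsto_diff tendsto_const
        LIMSEQ_inverse_real_of_nat) (simp add: less_top)
  moreover have "c * ennreal (1 - inverse (real (Suc n))) \<le> x" for n
    using assms[of "inverse (real (Suc n))"] by (simp add: mult.commute inverse_le_1_iff)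
  ultimately show ?thesis
    by (intro LIMSEQ_le_const2) auto
qed

lemma ennreal_INF_eq_0_if_partial_sums_bounded:
  fixes f :: "nat \<Rightarrow> ennreal"
  assumes "\<And>n. (\<Sum>k<n. f k) \<le> C" "C \<noteq> top"
  shows "(INF n. f n) = 0"
proof -
  define m where "m = (INF n. f n)"
  have bound: "of_nat n * m \<le> C" for n
  proof -
    have "of_nat n * m = (\<Sum>k<n. m)" by simp
    also have "\<dots> \<le> (\<Sum>k<n. f k)" by (intro sum_mono) (simp add: m_def INF_lower)
    also have "\<dots> \<le> C" by (rule assms(1))
    finally show ?thesis .
  qed
  obtain C' where C': "C = ennreal C'" "0 \<le> C'"
    using assms(2) by (cases C) auto
  obtain m' where m': "m = ennreal m'" "0 \<le> m'"
    using bound[of 1] assms(2) by (cases m) (auto simp: top_unique)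
  have "\<not> C' < real n * m'" for n
    using bound[of n] C' m' by (simp add: ennreal_of_nat_eq_real_of_nat flip: ennreal_mult)
  then have "m' = 0"
    using ex_less_of_nat_mult[of m' C'] m'(2) by fastforce
  then show ?thesis
    using m' m_def by simp
qed

lemma affineE_add:
  assumes "affineE K"
  shows "K (\<lambda>d. a d + b d) d + K zeroE d = K a d + K b d"
proof -
  have midpoint: "K (\<lambda>d. ennreal (1/2) * \<eta>1 d + ennreal (1/2) * \<eta>2 d) =
      (\<lambda>d. ennreal (1/2) * K \<eta>1 d + ennreal (1/2) * K \<eta>2 d)" for \<eta>1 \<eta>2
    using assms[unfolded affineE_def, rule_format, of "1/2" \<eta>1 \<eta>2] by simp
  have "(\<lambda>d. ennreal (1/2) * (a d + b d) + ennreal (1/2) * zeroE d) =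
      (\<lambda>d. ennreal (1/2) * a d + ennreal (1/2) * b d)"
    by (simp add: zeroE_def distrib_left)
  then have "(\<lambda>d. ennreal (1/2) * K (\<lambda>d. a d + b d) d + ennreal (1/2) * K zeroE d) =
      (\<lambda>d. ennreal (1/2) * K a d + ennreal (1/2) * K b d)"
    using midpoint[of "\<lambda>d. a d + b d" zeroE] midpoint[of a b] by simp
  then have "ennreal (1/2) * (K (\<lambda>d. a d + b d) d + K zeroE d) = ennreal (1/2) * (K a d + K b d)"
    unfolding distrib_left by (rule fun_cong)
  then show ?thesis
    by (simp add: ennreal_mult_cancel_left)
qed

lemma affineE_zero_scaled_le:
  assumes "affineE K" "0 < \<alpha>" "\<alpha> \<le> 1"
  shows "ennreal (1 - \<alpha>) * K zeroE d \<le> K \<eta> d"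
proof -
  define \<eta>' where "\<eta>' = (\<lambda>d. ennreal (1/\<alpha>) * \<eta> d)"
  have "ennreal \<alpha> * ennreal (1/\<alpha>) = 1"
    using assms(2) by (simp flip: ennreal_mult)
  then have "(\<lambda>d. ennreal \<alpha> * \<eta>' d + ennreal (1 - \<alpha>) * zeroE d) = \<eta>"
    unfolding \<eta>'_def zeroE_def by (simp add: mult.assoc[symmetric])
  moreover have "K (\<lambda>d. ennreal \<alpha> * \<eta>' d + ennreal (1 - \<alpha>) * zeroE d) =
      (\<lambda>d. ennreal \<alpha> * K \<eta>' d + ennreal (1 - \<alpha>) * K zeroE d)"
    using assms(1)[unfolded affineE_def, rule_format, of \<alpha> \<eta>' zeroE] assms(2,3) by simp
  ultimately have "K \<eta> d = ennreal \<alpha> * K \<eta>' d + ennreal (1 - \<alpha>) * K zeroE d"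
    by metis
  then show ?thesis
    by (simp add: add_increasing)
qed

lemma affineE_zero_le:
  assumes "affineE K"
  shows "K zeroE d \<le> K \<eta> d"
  by (rule ennreal_le_if_scaled_le, rule affineE_zero_scaled_le[OF assms])

definition additiveE :: "(('d \<Rightarrow> 'a::plus) \<Rightarrow> ('d \<Rightarrow> 'a)) \<Rightarrow> bool" where
  "additiveE L \<longleftrightarrow> (\<forall>a b. L (\<lambda>d. a d + b d) = (\<lambda>d. L a d + L b d))"

lemma additiveE_funpow:
  assumes "additiveE L"
  shows "additiveE (L ^^ n)"
  by (induction n) (use assms in \<open>simp_all add: additiveE_def\<close>)

lemma additiveE_mono:
  fixes L :: "('d \<Rightarrow> 'a::canonically_ordered_monoid_add) \<Rightarrow> ('d \<Rightarrow> 'a)"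
  assumes "additiveE L"
  shows "mono L"
proof (rule monoI)
  fix a b :: "'d \<Rightarrow> 'a"
  assume "a \<le> b"
  then have "\<forall>d. \<exists>c. b d = a d + c"
    by (simp add: le_fun_def le_iff_add)
  then obtain c where "b = (\<lambda>d. a d + c d)"
    by metis
  then show "L a \<le> L b"
    using assms unfolding additiveE_def by (simp add: le_fun_def add_increasing2)
qed

lemma ranking_partial_sum_le:
  fixes L :: "('d \<Rightarrow> 'a::canonically_ordered_monoid_add) \<Rightarrow> ('d \<Rightarrow> 'a)"
  assumes "additiveE L" "\<And>d. L r d + u d \<le> r d"
  shows "(\<Sum>k<n. (L ^^ k) u d) + (L ^^ n) r d \<le> r d"
proof (induction n)
  case 0
  then show ?case by simp
next
  case (Suc n)
  have "(L ^^ n) u d + (L ^^ Suc n) r d = (L ^^ n) (\<lambda>d. L r d + u d) d"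
    using additiveE_funpow[OF assms(1), of n]
    by (simp add: additiveE_def funpow_Suc_right add.commute del: funpow.simps)
  also have "\<dots> \<le> (L ^^ n) r d"
    using funpow_mono[OF additiveE_mono[OF assms(1)], of "\<lambda>d. L r d + u d" r n] assms(2)
    by (simp add: le_fun_def)
  finally show ?case
    using Suc.IH by (simp add: add.assoc) (meson add_left_mono order_trans)
qed

lemma additiveE_diffop:
  assumes "affineE K"
  shows "additiveE (diffop K)"
  unfolding additiveE_def diffop_def
  using affineE_add[OF assms] affineE_zero_le[OF assms]
  by (auto intro!: tdiff_add_split)

theorem theorem3p6:
  fixes K :: "('d \<Rightarrow> ennreal) \<Rightarrow> ('d \<Rightarrow> ennreal)" and u :: "'d \<Rightarrow> ennreal"
  assumes "affineE K"
    and "\<forall>d. u d < \<infinity>"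
    and "\<exists>r. ranking_supermartingale (diffop K) u r"
  shows "(INF n. (diffop K ^^ n) u) = zeroE"
proof -
  obtain r where r_finite: "\<And>d. r d < \<infinity>" and r_ranking: "\<And>d. diffop K r d + u d \<le> r d"
    using assms(3) unfolding ranking_supermartingale_def by blast
  have "(INF n. (diffop K ^^ n) u d) = 0" for d
  proof (rule ennreal_INF_eq_0_if_partial_sums_bounded)
    show "(\<Sum>k<n. (diffop K ^^ k) u d) \<le> r d" for n
      using ranking_partial_sum_le[OF additiveE_diffop[OF assms(1)] r_ranking, where n=n and d=d]
      by (meson le_iff_add order_trans)
    show "r d \<noteq> top"
      using r_finite[of d] by simp
  qed
  then show ?thesis
    by (simp add: zeroE_def fun_eq_iff image_comp)
qed

end
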